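(* Let $P:\mathcal C^{op}\to\mathbf{MSLat}$ be a primary doctrine and $S\in\mathfrak I_{\mathrm{Fr}}(P)(c)$. Then $S=\exists_f\eta^P_d(x)$ for some morphism $f:d\to c$ of $\mathcal C$ and some $x\in P(d)$ (where $\exists_f$ is the left adjoint of $\mathfrak I_{\mathrm{Fr}}(P)(f)$) if and only if the object $(c,S)$ is supercompact in the site $(\mathcal C\rtimes\mathfrak I_{\mathrm{Fr}}(P),K_{\mathfrak I_{\mathrm{Fr}}(P)})$, i.e. every $K_{\mathfrak I_{\mathrm{Fr}}(P)}$-covering sieve on $(c,S)$ contains a single morphism which by itself generates a covering sieve.
   Context: $\mathbf{MSLat}$: meet-semilattices with top and finite-meet-preserving maps; a primary doctrine is $P:\mathcal C^{op}\to\mathbf{MSLat}$ with $\mathcal C$ having finite limits. For a doctrine $Q$, $\mathcal C\rtimes Q$ has objects $(c,x)$, $x\in Q(c)$, morphisms $f:(c,x)\to(d,y)$ the $f:c\to d$ with $x\le Q(f)(y)$. Free geometric completion $\mathfrak I_{\mathrm{Fr}}(P):\mathcal C^{op}\to\mathbf{Frm}$: $\mathfrak I_{\mathrm{Fr}}(P)(c)$ is the set, ordered by inclusion, of sets $S$ of pairs $(f,x)$ with $f:d\to c$ in $\mathcal C$, $x\in P(d)$, such that $(f,x)\in S$, $g:e\to d$, $y\in P(e)$, $y\le P(g)(x)$ imply $(f\circ g,y)\in S$; for $f:d\to c$, $\mathfrak I_{\mathrm{Fr}}(P)(f)(S)=\{(g,y):(f\circ g,y)\in S\}$, which has a left adjoint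 $\exists_f$ (explicitly $\exists_f(T)=\{(f\circ g,y):(g,y)\in T\}$). The unit is $\eta^P_c(x)=\{(g,y):g:e\to c,\ y\in P(e),\ y\le P(g)(x)\}$. $K_{\mathfrak I_{\mathrm{Fr}}(P)}$ is the topology on $\mathcal C\rtimes\mathfrak I_{\mathrm{Fr}}(P)$ in which $\{f_i:(c_i,U_i)\to(d,V)\}$ covers iff $V=\bigcup_i\exists_{f_i}U_i$. *)

theory Defs
  imports Main
begin

record ('o, 'm) cat =
  Ob   :: "'o set"
  Mor  :: "'m set"
  cdom :: "'m \<Rightarrow> 'o"
  ccod :: "'m \<Rightarrow> 'o"
  idm  :: "'o \<Rightarrow> 'm"
  comp :: "'m \<Rightarrow> 'm \<Rightarrow> 'm"   (* comp f g = f \<circ> g *)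

definition hom :: "('o, 'm) cat \<Rightarrow> 'o \<Rightarrow> 'o \<Rightarrow> 'm set" where
  "hom C a b = {f \<in> Mor C. cdom C f = a \<and> ccod C f = b}"

definition category :: "('o, 'm) cat \<Rightarrow> bool" where
  "category C \<longleftrightarrow>
     (\<forall>f\<in>Mor C. cdom C f \<in> Ob C \<and> ccod C f \<in> Ob C) \<and>
     (\<forall>a\<in>Ob C. idm C a \<in> hom C a a) \<and>
     (\<forall>f\<in>Mor C. \<forall>g\<in>Mor C. ccod C g = cdom C f \<longrightarrow>
         comp C f g \<in> hom C (cdom C g) (ccod C f)) \<and>
     (\<forall>f\<in>Mor C. comp C f (idm C (cdom C f)) = f \<and> comp C (idm C (ccod C f)) f = f) \<and>
     (\<forall>f\<in>Mor C. \<forall>g\<in>Mor C. \<forall>h\<in>Mor C. ccod C h = cdom C g \<longrightarrow> ccod C g = cdom C f \<longrightarrow>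
         comp C f (comp C g h) = comp C (comp C f g) h)"

definition has_terminal :: "('o, 'm) cat \<Rightarrow> bool" where
  "has_terminal C \<longleftrightarrow> (\<exists>t\<in>Ob C. \<forall>a\<in>Ob C. \<exists>!u. u \<in> hom C a t)"

definition has_pullbacks :: "('o, 'm) cat \<Rightarrow> bool" where
  "has_pullbacks C \<longleftrightarrow>
     (\<forall>a\<in>Ob C. \<forall>b\<in>Ob C. \<forall>c\<in>Ob C. \<forall>f\<in>hom C a c. \<forall>g\<in>hom C b c.
        \<exists>p\<in>Ob C. \<exists>p1\<in>hom C p a. \<exists>p2\<in>hom C p b. comp C f p1 = comp C g p2 \<and>
          (\<forall>q\<in>Ob C. \<forall>q1\<in>hom C q a. \<forall>q2\<in>hom C q b. comp C f q1 = comp C g q2 \<longrightarrow>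
             (\<exists>!u. u \<in> hom C q p \<and> comp C p1 u = q1 \<and> comp C p2 u = q2)))"

definition finitely_complete :: "('o, 'm) cat \<Rightarrow> bool" where
  "finitely_complete C \<longleftrightarrow> category C \<and> has_terminal C \<and> has_pullbacks C"

record ('m, 'p, 'o) doctrine =
  PC   :: "'o \<Rightarrow> 'p set"              (* carrier of P(c) *)
  ple  :: "'o \<Rightarrow> 'p \<Rightarrow> 'p \<Rightarrow> bool"
  Pmap :: "'m \<Rightarrow> 'p \<Rightarrow> 'p"           (* P(f) : P(cod f) \<rightarrow> P(dom f) *)

definition mslat :: "'p set \<Rightarrow> ('p \<Rightarrow> 'p \<Rightarrow> bool) \<Rightarrow> bool" where
  "mslat A le \<longleftrightarrow>
     (\<forall>x\<in>A. le x x) \<and>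
     (\<forall>x\<in>A. \<forall>y\<in>A. \<forall>z\<in>A. le x y \<longrightarrow> le y z \<longrightarrow> le x z) \<and>
     (\<forall>x\<in>A. \<forall>y\<in>A. le x y \<longrightarrow> le y x \<longrightarrow> x = y) \<and>
     (\<exists>t\<in>A. \<forall>x\<in>A. le x t) \<and>
     (\<forall>x\<in>A. \<forall>y\<in>A. \<exists>m\<in>A. le m x \<and> le m y \<and> (\<forall>z\<in>A. le z x \<longrightarrow> le z y \<longrightarrow> le z m))"

definition is_top :: "'p set \<Rightarrow> ('p \<Rightarrow> 'p \<Rightarrow> bool) \<Rightarrow> 'p \<Rightarrow> bool" where
  "is_top A le t \<longleftrightarrow> t \<in> A \<and> (\<forall>x\<in>A. le x t)"

definition is_meet :: "'p set \<Rightarrow> ('p \<Rightarrow> 'p \<Rightarrow> bool) \<Rightarrow> 'p \<Rightarrow> 'p \<Rightarrow> 'p \<Rightarrow> bool" where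
  "is_meet A le x y m \<longleftrightarrow> m \<in> A \<and> le m x \<and> le m y \<and> (\<forall>z\<in>A. le z x \<longrightarrow> le z y \<longrightarrow> le z m)"

definition mslat_hom ::
  "'p set \<Rightarrow> ('p \<Rightarrow> 'p \<Rightarrow> bool) \<Rightarrow> 'p set \<Rightarrow> ('p \<Rightarrow> 'p \<Rightarrow> bool) \<Rightarrow> ('p \<Rightarrow> 'p) \<Rightarrow> bool" where
  "mslat_hom A leA B leB h \<longleftrightarrow>
     (\<forall>x\<in>A. h x \<in> B) \<and>
     (\<forall>t. is_top A leA t \<longrightarrow> is_top B leB (h t)) \<and>
     (\<forall>x\<in>A. \<forall>y\<in>A. \<forall>m. is_meet A leA x y m \<longrightarrow> is_meet B leB (h x) (h y) (h m))"

definition primary_doctrine :: "('o, 'm) cat \<Rightarrow> ('m, 'p, 'o) doctrine \<Rightarrow> bool" where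
  "primary_doctrine C P \<longleftrightarrow>
     finitely_complete C \<and>
     (\<forall>a\<in>Ob C. mslat (PC P a) (ple P a)) \<and>
     (\<forall>f\<in>Mor C. mslat_hom (PC P (ccod C f)) (ple P (ccod C f))
                           (PC P (cdom C f)) (ple P (cdom C f)) (Pmap P f)) \<and>
     (\<forall>a\<in>Ob C. \<forall>x\<in>PC P a. Pmap P (idm C a) x = x) \<and>
     (\<forall>f\<in>Mor C. \<forall>g\<in>Mor C. ccod C g = cdom C f \<longrightarrow>
        (\<forall>x\<in>PC P (ccod C f). Pmap P (comp C f g) x = Pmap P g (Pmap P f x)))"

definition IFr :: "('o, 'm) cat \<Rightarrow> ('m, 'p, 'o) doctrine \<Rightarrow> 'o \<Rightarrow> ('m \<times> 'p) set set" where
  "IFr C P c = {S. S \<subseteq> {(f, x). f \<in> Mor C \<and> ccod C f = c \<and> x \<in> PC P (cdom C f)} \<and>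
      (\<forall>f x g y. (f, x) \<in> S \<longrightarrow> g \<in> Mor C \<longrightarrow> ccod C g = cdom C f \<longrightarrow>
          y \<in> PC P (cdom C g) \<longrightarrow> ple P (cdom C g) y (Pmap P g x) \<longrightarrow> (comp C f g, y) \<in> S)}"

text \<open>Reindexing IFr(P)(f) and its left adjoint \<exists>_f (explicit form).\<close>
definition IFr_map :: "('o, 'm) cat \<Rightarrow> 'm \<Rightarrow> ('m \<times> 'p) set \<Rightarrow> ('m \<times> 'p) set" where
  "IFr_map C f S = {(g, y). (comp C f g, y) \<in> S}"

definition IFr_ex :: "('o, 'm) cat \<Rightarrow> 'm \<Rightarrow> ('m \<times> 'p) set \<Rightarrow> ('m \<times> 'p) set" where
  "IFr_ex C f T = {(comp C f g, y) | g y. (g, y) \<in> T}"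

definition eta :: "('o, 'm) cat \<Rightarrow> ('m, 'p, 'o) doctrine \<Rightarrow> 'o \<Rightarrow> 'p \<Rightarrow> ('m \<times> 'p) set" where
  "eta C P c x = {(g, y). g \<in> Mor C \<and> ccod C g = c \<and> y \<in> PC P (cdom C g) \<and>
                          ple P (cdom C g) y (Pmap P g x)}"

text \<open>Arrows (d,U) \<rightarrow> (c,V) in C \<rtimes> IFr(P); an arrow into a fixed target is
  represented by the triple (d, U, f) of its source object and underlying morphism.\<close>
definition sd_arrow :: "('o, 'm) cat \<Rightarrow> ('m, 'p, 'o) doctrine \<Rightarrow>
    'o \<Rightarrow> ('m \<times> 'p) set \<Rightarrow> 'm \<Rightarrow> 'o \<Rightarrow> ('m \<times> 'p) set \<Rightarrow> bool" where
  "sd_arrow C P d U f c V \<longleftrightarrow> d \<in> Ob C \<and> c \<in> Ob C \<and> U \<in> IFr C P d \<and> V \<in> IFr C P c \<and>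
     f \<in> hom C d c \<and> U \<subseteq> IFr_map C f V"

definition sieve :: "('o, 'm) cat \<Rightarrow> ('m, 'p, 'o) doctrine \<Rightarrow> 'o \<Rightarrow> ('m \<times> 'p) set \<Rightarrow>
    ('o \<times> ('m \<times> 'p) set \<times> 'm) set \<Rightarrow> bool" where
  "sieve C P c S R \<longleftrightarrow>
     (\<forall>(d, U, f)\<in>R. sd_arrow C P d U f c S) \<and>
     (\<forall>(d, U, f)\<in>R. \<forall>e W g. sd_arrow C P e W g d U \<longrightarrow> (e, W, comp C f g) \<in> R)"

definition K_covers :: "('o, 'm) cat \<Rightarrow> ('m \<times> 'p) set \<Rightarrow>
    ('o \<times> ('m \<times> 'p) set \<times> 'm) set \<Rightarrow> bool" where
  "K_covers C S R \<longleftrightarrow> S = (\<Union>(d, U, f)\<in>R. IFr_ex C f U)"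

definition gen_sieve :: "('o, 'm) cat \<Rightarrow> ('m, 'p, 'o) doctrine \<Rightarrow>
    'o \<Rightarrow> ('m \<times> 'p) set \<Rightarrow> 'm \<Rightarrow> ('o \<times> ('m \<times> 'p) set \<times> 'm) set" where
  "gen_sieve C P d U f = {(e, W, comp C f g) | e W g. sd_arrow C P e W g d U}"

definition supercompact :: "('o, 'm) cat \<Rightarrow> ('m, 'p, 'o) doctrine \<Rightarrow> 'o \<Rightarrow> ('m \<times> 'p) set \<Rightarrow> bool" where
  "supercompact C P c S \<longleftrightarrow>
     (\<forall>R. sieve C P c S R \<longrightarrow> K_covers C S R \<longrightarrow>
        (\<exists>(d, U, f)\<in>R. K_covers C S (gen_sieve C P d U f)))"

end

theory Submission
  imports Defs
begin

text \<open>
  Every \<open>S \<in> IFr C P c\<close> is the union of the principal elements \<open>\<exists>\<^sub>f \<eta>(x)\<close> over its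
  members \<open>(f, x)\<close>, and the sieve generated by a single arrow \<open>h : (e, W) \<rightarrow> (c, S)\<close> covers
  exactly when \<open>S = \<exists>\<^sub>h W\<close>. If \<open>S = \<exists>\<^sub>f \<eta>(x)\<close>, the generator \<open>(f, x)\<close> of \<open>S\<close> lies in
  some \<open>\<exists>\<^sub>g U\<close> of a covering family, and then \<open>S \<subseteq> \<exists>\<^sub>g U \<subseteq> S\<close>. Conversely, the arrows
  factoring through the principal arrows \<open>f : (dom f, \<eta>(x)) \<rightarrow> (c, S)\<close> form a covering sieve;
  supercompactness picks one arrow \<open>f \<circ> g\<close> of it covering alone, whence
  \<open>S = \<exists>\<^sub>f (\<exists>\<^sub>g W) \<subseteq> \<exists>\<^sub>f \<eta>(x) \<subseteq> S\<close>.
\<close>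

definition IFr_principal :: "('o, 'm) cat \<Rightarrow> ('m, 'p, 'o) doctrine \<Rightarrow> 'o \<Rightarrow> ('m \<times> 'p) set \<Rightarrow> bool"
  where "IFr_principal C P c S \<longleftrightarrow>
    (\<exists>d f x. f \<in> hom C d c \<and> x \<in> PC P d \<and> S = IFr_ex C f (eta C P d x))"

lemma IFr_ex_subset_iff: "IFr_ex C f U \<subseteq> V \<longleftrightarrow> U \<subseteq> IFr_map C f V"
  unfolding IFr_ex_def IFr_map_def by blast

lemma IFr_ex_mono: "U \<subseteq> V \<Longrightarrow> IFr_ex C f U \<subseteq> IFr_ex C f V"
  unfolding IFr_ex_def by blast

lemma sd_arrow_IFr_ex_subset: "sd_arrow C P d U f c S \<Longrightarrow> IFr_ex C f U \<subseteq> S"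
  unfolding sd_arrow_def IFr_ex_subset_iff by blast

lemma hom_Mor: "f \<in> hom C a b \<longleftrightarrow> f \<in> Mor C \<and> cdom C f = a \<and> ccod C f = b"
  unfolding hom_def by blast

lemma IFr_memD:
  "S \<in> IFr C P c \<Longrightarrow> (m, z) \<in> S \<Longrightarrow> m \<in> Mor C \<and> ccod C m = c \<and> z \<in> PC P (cdom C m)"
  unfolding IFr_def by blast

lemma IFr_downward:
  "S \<in> IFr C P c \<Longrightarrow> (f, x) \<in> S \<Longrightarrow> g \<in> Mor C \<Longrightarrow> ccod C g = cdom C f \<Longrightarrow>
   y \<in> PC P (cdom C g) \<Longrightarrow> ple P (cdom C g) y (Pmap P g x) \<Longrightarrow> (comp C f g, y) \<in> S"
  unfolding IFr_def by blast

lemma IFr_ex_eta_subset: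
  assumes "S \<in> IFr C P c" and "(f, x) \<in> S"
  shows "IFr_ex C f (eta C P (cdom C f) x) \<subseteq> S"
  using IFr_downward[OF assms] unfolding IFr_ex_def eta_def by blast

context
  fixes C :: "('o, 'm) cat" and P :: "('m, 'p, 'o) doctrine"
  assumes category: "category C"
begin

lemma Mor_Ob: "f \<in> Mor C \<Longrightarrow> cdom C f \<in> Ob C \<and> ccod C f \<in> Ob C"
  using category unfolding category_def by blast

lemma comp_Mor:
  "f \<in> Mor C \<Longrightarrow> g \<in> Mor C \<Longrightarrow> ccod C g = cdom C f \<Longrightarrow>
   comp C f g \<in> Mor C \<and> cdom C (comp C f g) = cdom C g \<and> ccod C (comp C f g) = ccod C f"
  using category unfolding category_def hom_def by blast

lemma idm_Mor: "a \<in> Ob C \<Longrightarrow> idm C a \<in> Mor C \<and> cdom C (idm C a) = a \<and> ccod C (idm C a) = a"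
  using category unfolding category_def hom_def by blast

lemma comp_idm_right: "f \<in> Mor C \<Longrightarrow> comp C f (idm C (cdom C f)) = f"
  using category unfolding category_def by blast

lemma comp_idm_left: "f \<in> Mor C \<Longrightarrow> comp C (idm C (ccod C f)) f = f"
  using category unfolding category_def by blast

lemma comp_assoc:
  "f \<in> Mor C \<Longrightarrow> g \<in> Mor C \<Longrightarrow> h \<in> Mor C \<Longrightarrow> ccod C h = cdom C g \<Longrightarrow>
   ccod C g = cdom C f \<Longrightarrow> comp C f (comp C g h) = comp C (comp C f g) h"
  using category unfolding category_def by blast

lemma IFr_ex_comp:
  assumes U: "U \<in> IFr C P e" and g: "g \<in> hom C e d" and f: "f \<in> Mor C" "cdom C f = d"
  shows "IFr_ex C (comp C f g) U = IFr_ex C f (IFr_ex C g U)"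
proof -
  have "comp C (comp C f g) k = comp C f (comp C g k)" if "(k, y) \<in> U" for k y
    using comp_assoc[OF f(1), of g k] IFr_memD[OF U that] g f by (simp add: hom_Mor)
  then show ?thesis
    unfolding IFr_ex_def by (auto; metis)
qed

lemma sd_arrow_idm: "e \<in> Ob C \<Longrightarrow> W \<in> IFr C P e \<Longrightarrow> sd_arrow C P e W (idm C e) e W"
  unfolding sd_arrow_def hom_Mor IFr_map_def
  using idm_Mor comp_idm_left IFr_memD by fastforce

lemma sd_arrow_comp:
  assumes h: "sd_arrow C P e W h c S" and k: "sd_arrow C P e' W' k e W"
  shows "sd_arrow C P e' W' (comp C h k) c S"
proof -
  have "IFr_ex C (comp C h k) W' = IFr_ex C h (IFr_ex C k W')"
    using IFr_ex_comp[of W' e' k e h] h k by (simp add: sd_arrow_def hom_Mor)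
  also have "\<dots> \<subseteq> S"
    using IFr_ex_mono[OF sd_arrow_IFr_ex_subset[OF k]] sd_arrow_IFr_ex_subset[OF h] by blast
  finally show ?thesis
    using h k comp_Mor[of h k] unfolding sd_arrow_def hom_Mor IFr_ex_subset_iff by auto
qed

lemma sieve_gen_sieve:
  assumes f: "sd_arrow C P d U f c S"
  shows "sieve C P c S (gen_sieve C P d U f)"
  unfolding sieve_def
proof (intro conjI ballI, safe)
  fix e W g
  assume "(e, W, g) \<in> gen_sieve C P d U f"
  then obtain k where g: "g = comp C f k" and k: "sd_arrow C P e W k d U"
    unfolding gen_sieve_def by blast
  show "sd_arrow C P e W g c S"
    using sd_arrow_comp[OF f k] g by simp
  fix e' W' l
  assume l: "sd_arrow C P e' W' l e W"
  have "comp C g l = comp C f (comp C k l)"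
    using comp_assoc[of f k l] f k l g by (simp add: sd_arrow_def hom_Mor)
  then show "(e', W', comp C g l) \<in> gen_sieve C P d U f"
    using sd_arrow_comp[OF k l] unfolding gen_sieve_def by blast
qed

lemma sieve_UN: "(\<And>i. i \<in> I \<Longrightarrow> sieve C P c S (R i)) \<Longrightarrow> sieve C P c S (\<Union>i\<in>I. R i)"
  unfolding sieve_def by fast

lemma Union_IFr_ex_gen_sieve:
  assumes f: "sd_arrow C P d U f c S"
  shows "(\<Union>(e, W, g)\<in>gen_sieve C P d U f. IFr_ex C g W) = IFr_ex C f U"
proof
  have "(d, U, f) \<in> gen_sieve C P d U f"
    using sd_arrow_idm[of d U] comp_idm_right[of f] f
    unfolding gen_sieve_def sd_arrow_def hom_Mor by force
  then show "IFr_ex C f U \<subseteq> (\<Union>(e, W, g)\<in>gen_sieve C P d U f. IFr_ex C g W)"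
    by blast
  have "IFr_ex C g W \<subseteq> IFr_ex C f U" if mem: "(e, W, g) \<in> gen_sieve C P d U f" for e W g
  proof -
    obtain k where g: "g = comp C f k" and k: "sd_arrow C P e W k d U"
      using mem unfolding gen_sieve_def by blast
    have "IFr_ex C g W = IFr_ex C f (IFr_ex C k W)"
      using IFr_ex_comp[of W e k d f] f k g by (simp add: sd_arrow_def hom_Mor)
    also have "\<dots> \<subseteq> IFr_ex C f U"
      using IFr_ex_mono[OF sd_arrow_IFr_ex_subset[OF k]] .
    finally show ?thesis .
  qed
  then show "(\<Union>(e, W, g)\<in>gen_sieve C P d U f. IFr_ex C g W) \<subseteq> IFr_ex C f U"
    by blast
qed

lemma K_covers_gen_sieve_iff:
  "sd_arrow C P d U f c S \<Longrightarrow> K_covers C S (gen_sieve C P d U f) \<longleftrightarrow> S = IFr_ex C f U"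
  unfolding K_covers_def by (simp add: Union_IFr_ex_gen_sieve)

context
  assumes primary: "primary_doctrine C P"
begin

lemma ple_refl: "a \<in> Ob C \<Longrightarrow> x \<in> PC P a \<Longrightarrow> ple P a x x"
  using primary unfolding primary_doctrine_def mslat_def by blast

lemma ple_trans:
  "a \<in> Ob C \<Longrightarrow> x \<in> PC P a \<Longrightarrow> y \<in> PC P a \<Longrightarrow> z \<in> PC P a \<Longrightarrow>
   ple P a x y \<Longrightarrow> ple P a y z \<Longrightarrow> ple P a x z"
  using primary unfolding primary_doctrine_def mslat_def by blast

lemma Pmap_mslat_hom:
  "f \<in> Mor C \<Longrightarrow> mslat_hom (PC P (ccod C f)) (ple P (ccod C f))
                              (PC P (cdom C f)) (ple P (cdom C f)) (Pmap P f)"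
  using primary unfolding primary_doctrine_def by blast

lemma Pmap_PC: "f \<in> Mor C \<Longrightarrow> x \<in> PC P (ccod C f) \<Longrightarrow> Pmap P f x \<in> PC P (cdom C f)"
  using Pmap_mslat_hom unfolding mslat_hom_def by blast

text \<open>Monotonicity, because \<open>y \<le> x\<close> means that \<open>y\<close> is the meet of \<open>y\<close> and \<open>x\<close>.\<close>

lemma Pmap_mono:
  assumes f: "f \<in> Mor C" and x: "x \<in> PC P (ccod C f)" and y: "y \<in> PC P (ccod C f)"
    and le: "ple P (ccod C f) y x"
  shows "ple P (cdom C f) (Pmap P f y) (Pmap P f x)"
proof -
  have "is_meet (PC P (ccod C f)) (ple P (ccod C f)) y x y"
    unfolding is_meet_def using ple_refl Mor_Ob[OF f] le y by blast
  then have "is_meet (PC P (cdom C f)) (ple P (cdom C f)) (Pmap P f y) (Pmap P f x) (Pmap P f y)"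
    using Pmap_mslat_hom[OF f] x y unfolding mslat_hom_def by blast
  then show ?thesis
    unfolding is_meet_def by blast
qed

lemma Pmap_idm: "a \<in> Ob C \<Longrightarrow> x \<in> PC P a \<Longrightarrow> Pmap P (idm C a) x = x"
  using primary unfolding primary_doctrine_def by blast

lemma Pmap_comp:
  "f \<in> Mor C \<Longrightarrow> g \<in> Mor C \<Longrightarrow> ccod C g = cdom C f \<Longrightarrow>
   x \<in> PC P (ccod C f) \<Longrightarrow> Pmap P (comp C f g) x = Pmap P g (Pmap P f x)"
  using primary unfolding primary_doctrine_def by blast

lemma eta_IFr:
  assumes d: "d \<in> Ob C" and x: "x \<in> PC P d"
  shows "eta C P d x \<in> IFr C P d"
  unfolding IFr_def
proof (intro CollectI conjI allI impI)
  show "eta C P d x \<subseteq> {(f, x). f \<in> Mor C \<and> ccod C f = d \<and> x \<in> PC P (cdom C f)}"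
    unfolding eta_def by blast
next
  fix f y g z
  assume "(f, y) \<in> eta C P d x" and g: "g \<in> Mor C" "ccod C g = cdom C f"
    and z: "z \<in> PC P (cdom C g)" and z_le: "ple P (cdom C g) z (Pmap P g y)"
  then have f: "f \<in> Mor C" "ccod C f = d" and y: "y \<in> PC P (cdom C f)"
    and y_le: "ple P (cdom C f) y (Pmap P f x)"
    unfolding eta_def by auto
  have fx: "Pmap P f x \<in> PC P (cdom C f)"
    using Pmap_PC f x by blast
  have "ple P (cdom C g) (Pmap P g y) (Pmap P g (Pmap P f x))"
    using Pmap_mono[OF g(1)] g(2) y y_le fx by auto
  then have "ple P (cdom C g) z (Pmap P (comp C f g) x)"
    using ple_trans[OF _ z _ _ z_le] Mor_Ob Pmap_PC Pmap_comp[OF f(1) g] g f y fx x by auto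
  then show "(comp C f g, z) \<in> eta C P d x"
    unfolding eta_def using comp_Mor[OF f(1) g] f z by auto
qed

lemma mem_IFr_ex_eta:
  assumes f: "f \<in> Mor C" and x: "x \<in> PC P (cdom C f)"
  shows "(f, x) \<in> IFr_ex C f (eta C P (cdom C f) x)"
proof -
  have "(idm C (cdom C f), x) \<in> eta C P (cdom C f) x"
    unfolding eta_def using idm_Mor Pmap_idm ple_refl Mor_Ob f x by auto
  then show ?thesis
    using comp_idm_right[OF f] unfolding IFr_ex_def by force
qed

lemma IFr_eq_Union_principal:
  assumes S: "S \<in> IFr C P c"
  shows "S = (\<Union>(f, x)\<in>S. IFr_ex C f (eta C P (cdom C f) x))"
  using mem_IFr_ex_eta IFr_memD[OF S] IFr_ex_eta_subset[OF S] by fast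

lemma sd_arrow_eta:
  assumes c: "c \<in> Ob C" and S: "S \<in> IFr C P c" and fx: "(f, x) \<in> S"
  shows "sd_arrow C P (cdom C f) (eta C P (cdom C f) x) f c S"
  using IFr_memD[OF S fx] eta_IFr Mor_Ob IFr_ex_eta_subset[OF S fx] c S
  unfolding sd_arrow_def hom_Mor IFr_ex_subset_iff by blast

lemma supercompact_if_IFr_principal:
  assumes S: "S \<in> IFr C P c" and principal: "IFr_principal C P c S"
  shows "supercompact C P c S"
  unfolding supercompact_def
proof (intro allI impI)
  fix R
  assume R: "sieve C P c S R" and covers: "K_covers C S R"
  obtain d f x where f: "f \<in> hom C d c" and x: "x \<in> PC P d"
    and S_eq: "S = IFr_ex C f (eta C P d x)"
    using principal unfolding IFr_principal_def by blast
  have "(f, x) \<in> S"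
    using mem_IFr_ex_eta[of f x] f x S_eq by (simp add: hom_Mor)
  then obtain e U g where egU: "(e, U, g) \<in> R" and "(f, x) \<in> IFr_ex C g U"
    using covers unfolding K_covers_def by blast
  then obtain h where hU: "(h, x) \<in> U" and f_eq: "f = comp C g h"
    unfolding IFr_ex_def by blast
  have g: "sd_arrow C P e U g c S"
    using R egU unfolding sieve_def by blast
  have h: "h \<in> hom C d e"
    using IFr_memD[of U C P e h x] comp_Mor[of g h] g hU f f_eq
    by (auto simp: sd_arrow_def hom_Mor)
  have "d \<in> Ob C"
    using h Mor_Ob unfolding hom_Mor by blast
  then have "S = IFr_ex C g (IFr_ex C h (eta C P d x))"
    unfolding S_eq f_eq using IFr_ex_comp[OF eta_IFr h, where f=g] g x by (simp add: sd_arrow_def hom_Mor)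
  also have "\<dots> \<subseteq> IFr_ex C g U"
    using IFr_ex_mono[OF IFr_ex_eta_subset[of U C P e h x]] g h hU
    unfolding sd_arrow_def hom_Mor by blast
  finally have "S = IFr_ex C g U"
    using sd_arrow_IFr_ex_subset[OF g] by blast
  then show "\<exists>(d, U, f)\<in>R. K_covers C S (gen_sieve C P d U f)"
    using K_covers_gen_sieve_iff[OF g] egU by blast
qed

lemma IFr_principal_if_supercompact:
  assumes c: "c \<in> Ob C" and S: "S \<in> IFr C P c" and sc: "supercompact C P c S"
  shows "IFr_principal C P c S"
proof -
  define R where "R = (\<Union>(f, x)\<in>S. gen_sieve C P (cdom C f) (eta C P (cdom C f) x) f)"
  have "sieve C P c S R"
    unfolding R_def by (rule sieve_UN) (clarsimp intro!: sieve_gen_sieve, rule sd_arrow_eta[OF c S])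
  moreover have "K_covers C S R"
  proof -
    have "(\<Union>(e, W, g)\<in>R. IFr_ex C g W) = (\<Union>(f, x)\<in>S. IFr_ex C f (eta C P (cdom C f) x))"
      unfolding R_def UN_UN_flatten
      by (rule SUP_cong[OF refl]) (clarsimp simp: Union_IFr_ex_gen_sieve[OF sd_arrow_eta[OF c S]])
    then show ?thesis
      unfolding K_covers_def using IFr_eq_Union_principal[OF S] by argo
  qed
  ultimately obtain e W k where "(e, W, k) \<in> R" and covers: "K_covers C S (gen_sieve C P e W k)"
    using sc unfolding supercompact_def by blast
  then obtain f x g where fx: "(f, x) \<in> S" and k: "k = comp C f g"
    and g: "sd_arrow C P e W g (cdom C f) (eta C P (cdom C f) x)"
    unfolding R_def gen_sieve_def by blast
  have S_eq: "S = IFr_ex C k W"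
    using covers K_covers_gen_sieve_iff[OF sd_arrow_comp[OF sd_arrow_eta[OF c S fx] g]] k by simp
  have f: "f \<in> hom C (cdom C f) c" and x: "x \<in> PC P (cdom C f)"
    using IFr_memD[OF S fx] by (simp_all add: hom_Mor)
  have "S = IFr_ex C f (IFr_ex C g W)"
    using S_eq k IFr_ex_comp[of W e g "cdom C f" f] f g by (simp add: sd_arrow_def hom_Mor)
  also have "\<dots> \<subseteq> IFr_ex C f (eta C P (cdom C f) x)"
    using IFr_ex_mono[OF sd_arrow_IFr_ex_subset[OF g]] .
  finally have "S = IFr_ex C f (eta C P (cdom C f) x)"
    using IFr_ex_eta_subset[OF S fx] by blast
  then show ?thesis
    unfolding IFr_principal_def using f x by blast
qed

end

end

theorem lemma7p6:
  fixes C :: "('o, 'm) cat" and P :: "('m, 'p, 'o) doctrine"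
  assumes "primary_doctrine C P"
    and "c \<in> Ob C"
    and "S \<in> IFr C P c"
  shows "(\<exists>d f x. f \<in> hom C d c \<and> x \<in> PC P d \<and> S = IFr_ex C f (eta C P d x))
         \<longleftrightarrow> supercompact C P c S"
proof -
  have "category C"
    using assms(1) unfolding primary_doctrine_def finitely_complete_def by blast
  then show ?thesis
    using supercompact_if_IFr_principal[OF _ assms(1,3)] IFr_principal_if_supercompact[OF _ assms]
    unfolding IFr_principal_def by blast
qed

end
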